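(* Let $n>2r\ge 4$, let $G=\mathrm{S}_n$ acting on $\Omega=\binom{[n]}{r}$, let $\mathcal{B}_i=\{\alpha_1,\dots,\alpha_i\}\subseteq\Omega$, and let $G_i=G_{(\mathcal{B}_i)}$ be its pointwise stabiliser. Let $\alpha\in\Omega$. Then $|\alpha^{G_i}|$ is maximal among the orbit sizes $|\beta^{G_i}|$, $\beta\in\Omega$, if and only if there is a possible output $\alpha_{i+1}$ of $\mathtt{MetaGreedy}(\mathcal{B}_i)$ such that $(G_i)_\alpha\cong (G_i)_{\alpha_{i+1}}$.
   Context: For $u\in[n]$ let $N_{\mathcal{B}_i}(u)=\{\alpha\in\mathcal{B}_i : u\in\alpha\}$. The procedure $\mathtt{MetaGreedy}(\mathcal{B}_i)$ is: set $M_0=\emptyset$; for $j=1,\dots,r$, choose $m_j\in[n]\setminus M_{j-1}$ to be any point from any $G_i$-orbit $\Delta\subseteq[n]$ that maximises $\frac{|\Delta\setminus M_{j-1}|}{|\Delta\cap M_{j-1}|+1}$, and if this maximum value equals $1$ then additionally choose $m_j$ to be such a point with smallest neighbourhood size $|N_{\mathcal{B}_i}(m_j)|$; set $M_j=M_{j-1}\cup\{m_j\}$. The output is $\alpha_{i+1}=M_r$. Different choices give different possible outputs. *)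

theory Defs
  imports Complex_Main "HOL-Algebra.Sym_Groups"
begin

definition Omega :: "nat \<Rightarrow> nat \<Rightarrow> nat set set" where
  "Omega n r = {a. a \<subseteq> {1..n} \<and> card a = r}"

definition ptstab :: "nat \<Rightarrow> nat set set \<Rightarrow> (nat \<Rightarrow> nat) set" where
  "ptstab n B = {p \<in> carrier (sym_group n). \<forall>b\<in>B. p ` b = b}"

definition set_orbit :: "(nat \<Rightarrow> nat) set \<Rightarrow> nat set \<Rightarrow> nat set set" where
  "set_orbit H a = (\<lambda>p. p ` a) ` H"

definition set_stab :: "(nat \<Rightarrow> nat) set \<Rightarrow> nat set \<Rightarrow> (nat \<Rightarrow> nat) set" where
  "set_stab H a = {p \<in> H. p ` a = a}"

definition perm_grp :: "nat \<Rightarrow> (nat \<Rightarrow> nat) set \<Rightarrow> (nat \<Rightarrow> nat) monoid" where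
  "perm_grp n H = (sym_group n)\<lparr>carrier := H\<rparr>"

definition pt_orbits :: "nat \<Rightarrow> nat set set \<Rightarrow> nat set set" where
  "pt_orbits n B = {{p x | p. p \<in> ptstab n B} | x. x \<in> {1..n}}"

definition nbhd :: "nat set set \<Rightarrow> nat \<Rightarrow> nat set set" where
  "nbhd B u = {a \<in> B. u \<in> a}"

definition score :: "nat set \<Rightarrow> nat set \<Rightarrow> real" where
  "score D M = real (card (D - M)) / (real (card (D \<inter> M)) + 1)"

definition max_score :: "nat \<Rightarrow> nat set set \<Rightarrow> nat set \<Rightarrow> real" where
  "max_score n B M = Max ((\<lambda>D. score D M) ` pt_orbits n B)"

definition greedy_cands :: "nat \<Rightarrow> nat set set \<Rightarrow> nat set \<Rightarrow> nat set" where
  "greedy_cands n B M = {m \<in> {1..n} - M. \<exists>D \<in> pt_orbits n B. m \<in> D \<and> score D M = max_score n B M}"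

definition greedy_step :: "nat \<Rightarrow> nat set set \<Rightarrow> nat set \<Rightarrow> nat \<Rightarrow> bool" where
  "greedy_step n B M m \<longleftrightarrow> m \<in> greedy_cands n B M \<and>
     (max_score n B M = 1 \<longrightarrow> (\<forall>m' \<in> greedy_cands n B M. card (nbhd B m) \<le> card (nbhd B m')))"

definition metagreedy_output :: "nat \<Rightarrow> nat \<Rightarrow> nat set set \<Rightarrow> nat set \<Rightarrow> bool" where
  "metagreedy_output n r B a \<longleftrightarrow> (\<exists>ms. length ms = r \<and>
     (\<forall>j<r. greedy_step n B (set (take j ms)) (ms ! j)) \<and> a = set ms)"

end

(* The G_i-orbits on [n] are the cells of the partition of [n] cut out by B_i, and G_i is
   the product of the symmetric groups on these cells. So the G_i-orbit of an r-set X consists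
   of the sets meeting each cell D in |D \<inter> X| points; its size is
   w(X) = prod_D binom(|D|, |D \<inter> X|), and by orbit-stabiliser, isomorphic stabilisers give
   equal orbit sizes. If each count |D \<inter> Y| is |D \<inter> X| or |D| - |D \<inter> X|, then the
   stabiliser of Y is conjugate to that of X.

   The score of a cell D is the factor by which w grows when a point of D is added to M.
   Hence X maximises w among r-sets iff moving one point of X into another cell never
   increases w, and MetaGreedy, which always adds a point of a best cell, preserves this
   property: every output maximises w. Conversely, starting from a maximiser a, MetaGreedy can
   be run so that its partial output stays dominated, cell by cell, by a maximiser Y whose
   counts agree with those of a up to complement. Only in a tie at score 1 can the forced
   choice fall into a cell that Y already fills; then moving one point of Y between two cells
   of score 1 keeps w and complements both counts. *)

theory Submission
  imports Defs "HOL-Library.Disjoint_Sets" "HOL-Algebra.Group_Action"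
begin

section \<open>Weights of subsets of a partitioned set\<close>

lemma score_eq:
  assumes "finite D"
  shows "score D X = real (card D - card (D \<inter> X)) / (real (card (D \<inter> X)) + 1)"
  using assms by (simp add: score_def card_Diff_subset_Int)

lemma score_nonneg: "0 \<le> score D X"
  by (simp add: score_def)

lemma score_pos: "finite D \<Longrightarrow> D - X \<noteq> {} \<Longrightarrow> 0 < score D X"
  by (simp add: score_def card_gt_0_iff)

lemma score_cong: "D \<inter> X = D \<inter> Y \<Longrightarrow> score D X = score D Y"
proof -
  assume "D \<inter> X = D \<inter> Y"
  moreover from this have "D - X = D - Y" by blast
  ultimately show ?thesis by (simp add: score_def)
qed

lemma score_cong_card: "finite D \<Longrightarrow> card (D \<inter> X) = card (D \<inter> Y) \<Longrightarrow> score D X = score D Y"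
  by (simp add: score_eq)

lemma score_antimono:
  assumes "finite D" and "card (D \<inter> X) \<le> card (D \<inter> Y)"
  shows "score D Y \<le> score D X"
  unfolding score_eq[OF assms(1)] using assms by (intro frac_le) auto

lemma score_eq_1_iff: "finite D \<Longrightarrow> score D X = 1 \<longleftrightarrow> card D = 2 * card (D \<inter> X) + 1"
  by (simp add: score_eq add_pos_nonneg) linarith

lemma one_le_score_iff: "finite D \<Longrightarrow> 1 \<le> score D X \<longleftrightarrow> 2 * card (D \<inter> X) + 1 \<le> card D"
  by (simp add: score_eq add_pos_nonneg) linarith

lemma binomial_insert_score:
  assumes "finite D" and "w \<in> D" and "w \<notin> X"
  shows "real (card D choose card (D \<inter> insert w X)) = real (card D choose card (D \<inter> X)) * score D X"
proof -
  let ?d = "card D" and ?k = "card (D \<inter> X)"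
  have "card (D \<inter> insert w X) = Suc ?k"
    using assms by (simp add: insert_absorb)
  moreover have "Suc ?k * (?d choose Suc ?k) = (?d - ?k) * (?d choose ?k)"
    using binomial_absorption[of ?k ?d] binomial_absorb_comp[of ?d ?k] by simp
  then have "real (Suc ?k) * real (?d choose Suc ?k) = real (?d - ?k) * real (?d choose ?k)"
    by (metis of_nat_mult)
  ultimately show ?thesis
    unfolding score_eq[OF assms(1)] by (simp add: field_simps)
qed

lemma card_Int_remove: "finite D \<Longrightarrow> u \<in> D \<inter> X \<Longrightarrow> card (D \<inter> (X - {u})) = card (D \<inter> X) - 1"
  by (metis Int_Diff card_Diff_singleton)

lemma card_exchange: "finite X \<Longrightarrow> u \<in> X \<Longrightarrow> w \<notin> X \<Longrightarrow> card (insert w (X - {u})) = card X"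
  by (simp add: card_Diff_singleton) (metis Suc_pred card_gt_0_iff emptyE)

lemma card_Int_less_elim:
  assumes "finite D" and "card (D \<inter> X) < card (D \<inter> Y)"
  obtains u where "u \<in> D \<inter> Y" and "u \<notin> X"
proof -
  have "\<not> D \<inter> Y \<subseteq> D \<inter> X"
    using assms card_mono[of "D \<inter> X" "D \<inter> Y"] by auto
  then show ?thesis
    using that by blast
qed

lemma ex_bij_betw_image:
  assumes D: "finite D" and XY: "X \<subseteq> D" "Y \<subseteq> D" "card X = card Y"
  shows "\<exists>h. bij_betw h D D \<and> h ` X = Y"
proof -
  obtain f where f: "bij_betw f X Y"
    using finite_same_card_bij finite_subset D XY by metis
  have "card (D - X) = card (D - Y)"
    using D XY by (simp add: card_Diff_subset finite_subset)
  then obtain g where g: "bij_betw g (D - X) (D - Y)"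
    using finite_same_card_bij D by blast
  have "bij_betw (\<lambda>x. if x \<in> X then f x else g x) (X \<union> (D - X)) (Y \<union> (D - Y))"
    using f g by (intro bij_betw_disjoint_Un) auto
  moreover have "X \<union> (D - X) = D" "Y \<union> (D - Y) = D"
    using XY by blast+
  moreover have "(\<lambda>x. if x \<in> X then f x else g x) ` X = Y"
    using f by (simp add: bij_betw_def)
  ultimately show ?thesis by metis
qed

definition cell_weight :: "'a set set \<Rightarrow> 'a set \<Rightarrow> nat" where
  "cell_weight P X = (\<Prod>D\<in>P. card D choose card (D \<inter> X))"

definition weight_maximal :: "'a set \<Rightarrow> 'a set set \<Rightarrow> 'a set \<Rightarrow> bool" where
  "weight_maximal A P X \<longleftrightarrow> (\<forall>Y. Y \<subseteq> A \<longrightarrow> card Y = card X \<longrightarrow> cell_weight P Y \<le> cell_weight P X)"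

(* score D X is the factor by which cell_weight P grows when a point of D is added to X
   (binomial_insert_score), so this says that moving a point of X from D to E never increases
   the weight. *)
definition exchange_optimal :: "nat set set \<Rightarrow> nat set \<Rightarrow> bool" where
  "exchange_optimal P X \<longleftrightarrow> (\<forall>D\<in>P. \<forall>E\<in>P. \<forall>u\<in>D \<inter> X. score E X \<le> score D (X - {u}))"

definition counts_up_to_complement :: "'a set set \<Rightarrow> 'a set \<Rightarrow> 'a set \<Rightarrow> bool" where
  "counts_up_to_complement P X Y \<longleftrightarrow>
     (\<forall>D\<in>P. card (D \<inter> Y) = card (D \<inter> X) \<or> card (D \<inter> Y) = card D - card (D \<inter> X))"

lemma weight_maximal_cong:
  "weight_maximal A P Y \<Longrightarrow> card Y' = card Y \<Longrightarrow> cell_weight P Y' = cell_weight P Y \<Longrightarrow> weight_maximal A P Y'"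
  unfolding weight_maximal_def by simp

(* Points are natural numbers only because score is defined on sets of naturals. *)
locale finite_partition =
  fixes A :: "nat set" and P :: "nat set set"
  assumes partition: "partition_on A P" and finite_ground: "finite A"
begin

lemma finite_cells: "finite P"
  using finite_elements[OF finite_ground partition] .

lemma cell_subset: "D \<in> P \<Longrightarrow> D \<subseteq> A"
  using partition_onD1[OF partition] by blast

lemma finite_cell: "D \<in> P \<Longrightarrow> finite D"
  using cell_subset finite_ground finite_subset by blast

lemma cells_disjoint: "D \<in> P \<Longrightarrow> E \<in> P \<Longrightarrow> D \<noteq> E \<Longrightarrow> D \<inter> E = {}"
  using partition_onD2[OF partition] by (auto dest: disjointD)

lemma card_eq_sum_cells:
  assumes "X \<subseteq> A"
  shows "card X = (\<Sum>D\<in>P. card (D \<inter> X))"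
proof -
  have "X = (\<Union>D\<in>P. D \<inter> X)"
    using assms partition_onD1[OF partition] by blast
  also have "card \<dots> = (\<Sum>D\<in>P. card (D \<inter> X))"
    using finite_cells finite_cell cells_disjoint by (intro card_UN_disjoint) auto
  finally show ?thesis .
qed

lemma cell_counts_eq_if_le:
  assumes "X \<subseteq> A" and "Y \<subseteq> A" and le: "\<forall>D\<in>P. card (D \<inter> X) \<le> card (D \<inter> Y)"
    and "card Y \<le> card X"
  shows "\<forall>D\<in>P. card (D \<inter> X) = card (D \<inter> Y)"
proof -
  have "(\<Sum>D\<in>P. card (D \<inter> X)) = (\<Sum>D\<in>P. card (D \<inter> Y))"
    using assms sum_mono[of P "\<lambda>D. card (D \<inter> X)"] card_eq_sum_cells by fastforce
  then show ?thesis
    using sum_mono_inv[of "\<lambda>D. card (D \<inter> X)" P] le finite_cells by blast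
qed

lemma card_Int_insert:
  assumes "D \<in> P" "G \<in> P" "m \<in> D" "m \<notin> M"
  shows "card (G \<inter> insert m M) = (if G = D then Suc (card (G \<inter> M)) else card (G \<inter> M))"
proof (cases "G = D")
  case True
  then show ?thesis using assms finite_cell by (simp add: insert_absorb)
next
  case False
  then have "G \<inter> insert m M = G \<inter> M" using cells_disjoint assms by blast
  then show ?thesis using False by simp
qed

lemma card_sets_with_cell_counts:
  "card {X. X \<subseteq> A \<and> (\<forall>D\<in>P. card (D \<inter> X) = k D)} = (\<Prod>D\<in>P. card D choose k D)"
proof -
  let ?S = "\<Pi>\<^sub>E D\<in>P. {Z. Z \<subseteq> D \<and> card Z = k D}"
  let ?T = "{X. X \<subseteq> A \<and> (\<forall>D\<in>P. card (D \<inter> X) = k D)}"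
  have pieces: "D \<inter> \<Union>(f ` P) = f D" if "f \<in> ?S" "D \<in> P" for f D
    using that cells_disjoint by fastforce
  have "bij_betw (\<lambda>f. \<Union>(f ` P)) ?S ?T"
  proof (rule bij_betw_byWitness[where f' = "\<lambda>X. restrict (\<lambda>D. D \<inter> X) P"])
    show "\<forall>f\<in>?S. restrict (\<lambda>D. D \<inter> \<Union>(f ` P)) P = f"
      using pieces by (auto simp: PiE_iff intro!: extensionalityI[where A = P])
    show "\<forall>X\<in>?T. \<Union>(restrict (\<lambda>D. D \<inter> X) P ` P) = X"
      using partition_onD1[OF partition] by auto
    show "(\<lambda>f. \<Union>(f ` P)) ` ?S \<subseteq> ?T"
      using pieces cell_subset by (fastforce simp: PiE_iff)
    show "(\<lambda>X. restrict (\<lambda>D. D \<inter> X) P) ` ?T \<subseteq> ?S"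
      by auto
  qed
  then have "card ?T = card ?S"
    by (simp add: bij_betw_same_card)
  also have "\<dots> = (\<Prod>D\<in>P. card D choose k D)"
    using finite_cells finite_cell by (simp add: card_PiE n_subsets)
  finally show ?thesis .
qed

lemma cell_weight_pos: "0 < cell_weight P X"
  unfolding cell_weight_def using finite_cell by (intro prod_pos) (simp add: card_mono)

lemma cell_weight_cong: "\<forall>D\<in>P. card (D \<inter> Y) = card (D \<inter> X) \<Longrightarrow> cell_weight P Y = cell_weight P X"
  unfolding cell_weight_def by (rule prod.cong) auto

lemma cell_weight_insert:
  assumes D: "D \<in> P" and w: "w \<in> D" "w \<notin> X"
  shows "real (cell_weight P (insert w X)) = real (cell_weight P X) * score D X"
proof -
  have others: "G \<inter> insert w X = G \<inter> X" if "G \<in> P - {D}" for G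
    using cells_disjoint that D w by blast
  have "real (cell_weight P (insert w X))
      = real (card D choose card (D \<inter> insert w X))
        * (\<Prod>G\<in>P - {D}. real (card G choose card (G \<inter> insert w X)))"
    unfolding cell_weight_def of_nat_prod using prod.remove[OF finite_cells D] by simp
  also have "\<dots> = real (card D choose card (D \<inter> X)) * score D X
        * (\<Prod>G\<in>P - {D}. real (card G choose card (G \<inter> X)))"
    using binomial_insert_score[OF finite_cell[OF D] w] others by simp
  also have "\<dots> = real (cell_weight P X) * score D X"
    unfolding cell_weight_def of_nat_prod
    using prod.remove[OF finite_cells D, of "\<lambda>G. real (card G choose card (G \<inter> X))"] by simp
  finally show ?thesis .
qed

lemma cell_weight_exchange:
  assumes D: "D \<in> P" "u \<in> D \<inter> X" and E: "E \<in> P" "D \<noteq> E" "w \<in> E" "w \<notin> X"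
  shows "real (cell_weight P (insert w (X - {u}))) * score D (X - {u})
       = real (cell_weight P X) * score E X"
proof -
  have "u \<notin> E" using cells_disjoint D E by blast
  then have "score E (X - {u}) = score E X"
    by (intro score_cong) blast
  moreover have "real (cell_weight P X) = real (cell_weight P (X - {u})) * score D (X - {u})"
    using cell_weight_insert[OF D(1), of u "X - {u}"] D(2) by (simp add: insert_absorb)
  moreover have "real (cell_weight P (insert w (X - {u}))) = real (cell_weight P (X - {u})) * score E (X - {u})"
    using cell_weight_insert[OF E(1,3)] E(4) by simp
  ultimately show ?thesis by simp
qed

lemma cell_weight_le_exchange:
  assumes opt: "exchange_optimal P X"
    and D: "D \<in> P" "card (D \<inter> X) < card (D \<inter> Y)" "u \<in> D \<inter> Y"
    and E: "E \<in> P" "card (E \<inter> Y) < card (E \<inter> X)" "w \<in> E \<inter> X" "w \<notin> Y"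
  shows "cell_weight P Y \<le> cell_weight P (insert w (Y - {u}))"
proof -
  have "D \<noteq> E" using D E by auto
  have "score D (Y - {u}) \<le> score D X"
    using D(2) card_Int_remove[OF finite_cell[OF D(1)] D(3)]
    by (intro score_antimono[OF finite_cell[OF D(1)]]) auto
  also have "\<dots> \<le> score E (X - {w})"
    using opt D(1) E(1,3) unfolding exchange_optimal_def by blast
  also have "\<dots> \<le> score E Y"
    using E(2) card_Int_remove[OF finite_cell[OF E(1)] E(3)]
    by (intro score_antimono[OF finite_cell[OF E(1)]]) auto
  finally have "real (cell_weight P Y) * score D (Y - {u})
      \<le> real (cell_weight P (insert w (Y - {u}))) * score D (Y - {u})"
    using cell_weight_exchange[OF D(1,3) E(1) \<open>D \<noteq> E\<close>] E(3,4) by (simp add: mult_left_mono)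
  moreover have "0 < score D (Y - {u})"
    using D(1,3) finite_cell by (intro score_pos) auto
  ultimately show ?thesis
    by simp
qed

lemma exchange_optimal_imp_weight_maximal:
  assumes X: "X \<subseteq> A" and opt: "exchange_optimal P X"
  shows "weight_maximal A P X"
  unfolding weight_maximal_def
proof (intro allI impI)
  fix Y assume "Y \<subseteq> A" "card Y = card X"
  then show "cell_weight P Y \<le> cell_weight P X"
  proof (induction "card (Y - X)" arbitrary: Y rule: less_induct)
    case less
    note Y = less.prems
    show ?case
    proof (cases "\<forall>D\<in>P. card (D \<inter> Y) \<le> card (D \<inter> X)")
      case True
      then show ?thesis
        using cell_counts_eq_if_le[OF Y(1) X True] Y(2) by (simp add: cell_weight_cong[of Y X])
    next
      case False
      then obtain D where D: "D \<in> P" "card (D \<inter> X) < card (D \<inter> Y)"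
        by (auto simp: not_le)
      then obtain E where E: "E \<in> P" "card (E \<inter> Y) < card (E \<inter> X)"
        using cell_counts_eq_if_le[OF X Y(1)] Y(2) by (metis less_irrefl not_le)
      obtain u where u: "u \<in> D \<inter> Y" "u \<notin> X"
        using D finite_cell by (blast elim: card_Int_less_elim)
      obtain w where w: "w \<in> E \<inter> X" "w \<notin> Y"
        using E finite_cell by (blast elim: card_Int_less_elim)
      let ?Y' = "insert w (Y - {u})"
      have "finite Y"
        using Y(1) finite_ground finite_subset by blast
      then have "card (?Y' - X) < card (Y - X)"
        using u w by (intro psubset_card_mono) auto
      moreover have "?Y' \<subseteq> A" "card ?Y' = card X"
        using Y w u X card_exchange[OF \<open>finite Y\<close>] by auto
      ultimately have "cell_weight P ?Y' \<le> cell_weight P X"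
        using less.hyps by blast
      then show ?thesis
        using cell_weight_le_exchange[OF opt D u(1) E w] by simp
    qed
  qed
qed

lemma weight_maximal_imp_exchange_optimal:
  assumes X: "X \<subseteq> A" and max: "weight_maximal A P X"
  shows "exchange_optimal P X"
  unfolding exchange_optimal_def
proof (intro ballI)
  fix D E u assume D: "D \<in> P" and E: "E \<in> P" and u: "u \<in> D \<inter> X"
  show "score E X \<le> score D (X - {u})"
  proof (cases "D = E \<or> E \<subseteq> X")
    case True
    then show ?thesis
    proof
      assume "D = E"
      then show ?thesis
        using D finite_cell by (auto intro!: score_antimono card_mono)
    next
      assume "E \<subseteq> X"
      then have "score E X = 0" by (simp add: score_def Diff_eq_empty_iff[THEN iffD2])
      then show ?thesis using score_nonneg by simp
    qed
  next
    case False
    then obtain w where w: "w \<in> E" "w \<notin> X" and "D \<noteq> E" by blast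
    have "finite X" using X finite_ground finite_subset by blast
    moreover have "insert w (X - {u}) \<subseteq> A"
      using X w cell_subset[OF E] by blast
    ultimately have "cell_weight P (insert w (X - {u})) \<le> cell_weight P X"
      using max u w card_exchange[of X u w] unfolding weight_maximal_def by simp
    then have "real (cell_weight P X) * score E X \<le> real (cell_weight P X) * score D (X - {u})"
      using cell_weight_exchange[OF D u E \<open>D \<noteq> E\<close> w]
      by (metis mult_right_mono of_nat_le_iff score_nonneg)
    then show ?thesis
      using cell_weight_pos by simp
  qed
qed

lemma exchange_optimal_insert:
  assumes opt: "exchange_optimal P M" and D: "D \<in> P" "m \<in> D" "m \<notin> M"
    and max: "\<forall>E\<in>P. score E M \<le> score D M"
  shows "exchange_optimal P (insert m M)"
  unfolding exchange_optimal_def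
proof (intro ballI)
  fix G E u assume G: "G \<in> P" and E: "E \<in> P" and u: "u \<in> G \<inter> insert m M"
  have "score E (insert m M) \<le> score E M"
    using E finite_cell by (auto intro!: score_antimono card_mono)
  also have "\<dots> \<le> score G (insert m M - {u})"
  proof (cases "G = D")
    case True
    have "card (D \<inter> (insert m M - {u})) = card (D \<inter> M)"
      using u D finite_cell[OF D(1)] True card_Int_remove[of D u "insert m M"] by (simp add: insert_absorb)
    then show ?thesis
      using max E True finite_cell[OF D(1)] score_cong_card by metis
  next
    case False
    then have "G \<inter> (insert m M - {u}) = G \<inter> (M - {u})" "u \<in> G \<inter> M"
      using cells_disjoint[OF G D(1)] D u by blast+
    then show ?thesis
      using opt G E score_cong unfolding exchange_optimal_def by metis
  qed
  finally show "score E (insert m M) \<le> score G (insert m M - {u})" .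
qed

lemma max_score_cell_with_deficit:
  assumes Y: "Y \<subseteq> A" "weight_maximal A P Y" and M: "M \<subseteq> A" "card M < card Y"
    and le: "\<forall>G\<in>P. card (G \<inter> M) \<le> card (G \<inter> Y)"
  shows "\<exists>D\<in>P. card (D \<inter> M) < card (D \<inter> Y) \<and> (\<forall>E\<in>P. score E M \<le> score D M)"
proof -
  obtain D where D: "D \<in> P" "card (D \<inter> M) < card (D \<inter> Y)"
    using le M card_eq_sum_cells[OF M(1)] card_eq_sum_cells[OF Y(1)]
    by (metis (no_types, lifting) le_neq_implies_less less_irrefl sum.cong)
  obtain E0 where E0: "E0 \<in> P" "\<forall>E\<in>P. score E M \<le> score E0 M"
  proof -
    have "Max ((\<lambda>E. score E M) ` P) \<in> (\<lambda>E. score E M) ` P"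
      using finite_cells D(1) by (intro Max_in) auto
    then obtain E0 where "E0 \<in> P" "score E0 M = Max ((\<lambda>E. score E M) ` P)"
      by auto
    then show ?thesis
      using that finite_cells by simp
  qed
  show ?thesis
  proof (cases "card (E0 \<inter> M) < card (E0 \<inter> Y)")
    case True
    then show ?thesis using E0 by blast
  next
    case False
    then have "card (E0 \<inter> M) = card (E0 \<inter> Y)"
      using le E0(1) by (simp add: le_antisym not_less)
    moreover obtain u where u: "u \<in> D \<inter> Y"
      using card_Int_less_elim[OF finite_cell[OF D(1)] D(2)] by blast
    ultimately have "score E0 M \<le> score D (Y - {u})"
      using weight_maximal_imp_exchange_optimal[OF Y] D(1) E0(1) score_cong_card finite_cell
      unfolding exchange_optimal_def by metis
    also have "\<dots> \<le> score D M"
      using D u card_Int_remove[OF finite_cell[OF D(1)] u]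
      by (intro score_antimono[OF finite_cell[OF D(1)]]) auto
    finally show ?thesis
      using D E0 by force
  qed
qed

lemma counts_up_to_complement_refl: "counts_up_to_complement P X X"
  unfolding counts_up_to_complement_def by simp

lemma counts_up_to_complement_trans:
  assumes "counts_up_to_complement P X Y" and "counts_up_to_complement P Y Z"
  shows "counts_up_to_complement P X Z"
  unfolding counts_up_to_complement_def
proof
  fix D assume D: "D \<in> P"
  then have "card (D \<inter> X) \<le> card D"
    using finite_cell by (simp add: card_mono)
  then show "card (D \<inter> Z) = card (D \<inter> X) \<or> card (D \<inter> Z) = card D - card (D \<inter> X)"
    using assms D unfolding counts_up_to_complement_def by fastforce
qed

lemma counts_up_to_complementE:
  assumes "counts_up_to_complement P X X'"
  obtains Y where "Y \<subseteq> A" and "\<forall>D\<in>P. card (D \<inter> Y) = card (D \<inter> X)"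
    and "\<forall>D\<in>P. D \<inter> X' = D \<inter> Y \<or> D \<inter> X' = D - Y"
proof -
  define Z where "Z D = (if card (D \<inter> X') = card (D \<inter> X) then D \<inter> X' else D - X')" for D
  define Y where "Y = (\<Union>D\<in>P. Z D)"
  have Z_sub: "Z D \<subseteq> D" for D
    unfolding Z_def by auto
  have Y_cell: "D \<inter> Y = Z D" if D: "D \<in> P" for D
    unfolding Y_def using Z_sub cells_disjoint[OF D] D by blast
  have "card (D \<inter> Y) = card (D \<inter> X)" if D: "D \<in> P" for D
  proof (cases "card (D \<inter> X') = card (D \<inter> X)")
    case False
    then have "card (D \<inter> X') = card D - card (D \<inter> X)"
      using assms D unfolding counts_up_to_complement_def by blast
    moreover have "card (D \<inter> X) \<le> card D"
      using finite_cell[OF D] by (simp add: card_mono)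
    ultimately show ?thesis
      using Y_cell[OF D] False finite_cell[OF D] by (simp add: Z_def card_Diff_subset_Int)
  qed (use Y_cell[OF D] in \<open>simp add: Z_def\<close>)
  moreover have "D \<inter> X' = D \<inter> Y \<or> D \<inter> X' = D - Y" if D: "D \<in> P" for D
  proof -
    have "D - Y = D - D \<inter> Y" by blast
    then show ?thesis
      using Y_cell[OF D] unfolding Z_def by (cases "card (D \<inter> X') = card (D \<inter> X)") auto
  qed
  moreover have "Y \<subseteq> A"
    unfolding Y_def using Z_sub cell_subset by blast
  ultimately show ?thesis
    using that[of Y] by blast
qed

lemma card_Int_exchange:
  assumes D: "D \<in> P" "u \<in> D \<inter> X" and E: "E \<in> P" "D \<noteq> E" "w \<in> E" "w \<notin> X" and G: "G \<in> P"
  shows "card (G \<inter> insert w (X - {u})) =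
    (if G = D then card (G \<inter> X) - 1 else if G = E then Suc (card (G \<inter> X)) else card (G \<inter> X))"
proof -
  have "u \<notin> E" "w \<notin> D"
    using cells_disjoint[OF D(1) E(1,2)] D E by blast+
  consider "G = D" | "G = E" | "G \<noteq> D" "G \<noteq> E" by blast
  then show ?thesis
  proof cases
    case 1
    then have "G \<inter> insert w (X - {u}) = D \<inter> (X - {u})" using \<open>w \<notin> D\<close> by blast
    then show ?thesis using 1 card_Int_remove[OF finite_cell[OF D(1)] D(2)] by simp
  next
    case 2
    then have "G \<inter> insert w (X - {u}) = insert w (E \<inter> X)" using \<open>u \<notin> E\<close> E by blast
    then show ?thesis using 2 E finite_cell[OF E(1)] by simp
  next
    case 3
    then have "G \<inter> insert w (X - {u}) = G \<inter> X"
      using cells_disjoint[OF G D(1)] cells_disjoint[OF G E(1)] D E by blast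
    then show ?thesis using 3 by simp
  qed
qed

lemma counts_insert_le:
  assumes D: "D \<in> P" "m \<in> D" "m \<notin> M" and "card (D \<inter> M) < card (D \<inter> Y)"
    and "\<forall>G\<in>P. card (G \<inter> M) \<le> card (G \<inter> Y)"
  shows "\<forall>G\<in>P. card (G \<inter> insert m M) \<le> card (G \<inter> Y)"
  using assms card_Int_insert[OF D(1) _ D(2,3)] by auto

(* Both scores being 1, moving a point of Y from D to E keeps the weight; the maximality of Y
   forces |D \<inter> Y| = |D \<inter> M| + 1, so both counts get complemented. *)
lemma exchange_between_score_one_cells:
  assumes Y: "Y \<subseteq> A" "weight_maximal A P Y"
    and D: "D \<in> P" "score D M = 1" "card (D \<inter> M) < card (D \<inter> Y)"
    and E: "E \<in> P" "score E M = 1" "card (E \<inter> Y) = card (E \<inter> M)"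
  obtains Y' where "Y' \<subseteq> A" and "card Y' = card Y" and "cell_weight P Y' = cell_weight P Y"
    and "counts_up_to_complement P Y Y'"
    and "\<And>G. G \<in> P \<Longrightarrow> card (G \<inter> Y') =
      (if G = D then card (G \<inter> M) else if G = E then Suc (card (G \<inter> M)) else card (G \<inter> Y))"
proof -
  have cardD: "card D = 2 * card (D \<inter> M) + 1"
    using score_eq_1_iff finite_cell D(1,2) by blast
  have scoreEY: "score E Y = 1"
    using E(2) score_cong_card[OF finite_cell[OF E(1)] E(3)] by simp
  then have cardE: "card E = 2 * card (E \<inter> Y) + 1"
    using score_eq_1_iff finite_cell E(1) by blast
  have "D \<noteq> E" using D(3) E(3) by auto
  obtain u where u: "u \<in> D \<inter> Y"
    using card_Int_less_elim[OF finite_cell[OF D(1)] D(3)] by blast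
  have "\<not> E \<subseteq> Y"
  proof
    assume "E \<subseteq> Y"
    then have "E \<inter> Y = E" by blast
    with cardE show False by simp
  qed
  then obtain w where w: "w \<in> E" "w \<notin> Y" by blast
  have "score E Y \<le> score D (Y - {u})"
    using weight_maximal_imp_exchange_optimal[OF Y] D(1) E(1) u
    unfolding exchange_optimal_def by blast
  then have "1 \<le> score D (Y - {u})"
    using scoreEY by simp
  then have cardDY: "card (D \<inter> Y) = Suc (card (D \<inter> M))"
    using one_le_score_iff[OF finite_cell[OF D(1)]] card_Int_remove[OF finite_cell[OF D(1)] u] cardD D(3)
    by simp
  define Y' where "Y' = insert w (Y - {u})"
  have count: "card (G \<inter> Y') =
      (if G = D then card (G \<inter> Y) - 1 else if G = E then Suc (card (G \<inter> Y)) else card (G \<inter> Y))"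
    if "G \<in> P" for G
    unfolding Y'_def using card_Int_exchange[OF D(1) u E(1) \<open>D \<noteq> E\<close> w that] .
  have "card (D \<inter> (Y - {u})) = card (D \<inter> M)"
    using cardDY card_Int_remove[OF finite_cell[OF D(1)] u] by simp
  then have "score D (Y - {u}) = 1"
    using D(2) score_cong_card[OF finite_cell[OF D(1)]] by metis
  then have "cell_weight P Y' = cell_weight P Y"
    using cell_weight_exchange[OF D(1) u E(1) \<open>D \<noteq> E\<close> w] scoreEY unfolding Y'_def by simp
  moreover have "counts_up_to_complement P Y Y'"
    unfolding counts_up_to_complement_def
  proof
    fix G assume G: "G \<in> P"
    show "card (G \<inter> Y') = card (G \<inter> Y) \<or> card (G \<inter> Y') = card G - card (G \<inter> Y)"
      using count[OF G] cardD cardE cardDY by (cases "G = D"; cases "G = E") simp_all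
  qed
  moreover have "Y' \<subseteq> A"
    unfolding Y'_def using Y(1) cell_subset[OF E(1)] w by blast
  moreover have "card Y' = card Y"
    unfolding Y'_def using finite_subset[OF Y(1) finite_ground] u w by (intro card_exchange) auto
  ultimately show ?thesis
    using that count cardDY E(3) \<open>D \<noteq> E\<close> by simp
qed

lemma exchange_at_score_one:
  assumes Y: "Y \<subseteq> A" "weight_maximal A P Y" and M: "M \<subseteq> A" "card M < card Y"
    and le: "\<forall>G\<in>P. card (G \<inter> M) \<le> card (G \<inter> Y)"
    and E: "E \<in> P" "m \<in> E" "m \<notin> M" and one: "score E M = 1" "\<forall>G\<in>P. score G M \<le> 1"
  obtains Y' where "Y' \<subseteq> A" and "card Y' = card Y" and "cell_weight P Y' = cell_weight P Y"
    and "counts_up_to_complement P Y Y'" and "\<forall>G\<in>P. card (G \<inter> insert m M) \<le> card (G \<inter> Y')"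
proof (cases "card (E \<inter> M) < card (E \<inter> Y)")
  case True
  then show ?thesis
    using that counts_insert_le[OF E True le] Y counts_up_to_complement_refl by blast
next
  case False
  then have eqE: "card (E \<inter> Y) = card (E \<inter> M)"
    using le E(1) by (simp add: le_antisym not_less)
  obtain D where D: "D \<in> P" "card (D \<inter> M) < card (D \<inter> Y)" and "\<forall>G\<in>P. score G M \<le> score D M"
    using max_score_cell_with_deficit[OF Y M le] by blast
  then have "score E M \<le> score D M" "score D M \<le> 1"
    using one(2) E(1) D(1) by blast+
  then have "score D M = 1"
    using one(1) by linarith
  then obtain Y' where Y': "Y' \<subseteq> A" "card Y' = card Y" "cell_weight P Y' = cell_weight P Y"
      "counts_up_to_complement P Y Y'"
    and count: "\<And>G. G \<in> P \<Longrightarrow> card (G \<inter> Y') =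
      (if G = D then card (G \<inter> M) else if G = E then Suc (card (G \<inter> M)) else card (G \<inter> Y))"
    using exchange_between_score_one_cells[OF Y D(1) _ D(2) E(1) one(1) eqE] by blast
  have "D \<noteq> E" using D(2) eqE by auto
  have "card (G \<inter> insert m M) \<le> card (G \<inter> Y')" if G: "G \<in> P" for G
    using count[OF G] card_Int_insert[OF E(1) G E(2,3)] le G \<open>D \<noteq> E\<close>
    by (cases "G = D"; cases "G = E") simp_all
  then show ?thesis
    using that Y' by blast
qed

end

section \<open>Pointwise stabilisers of families of subsets\<close>

definition cell :: "nat \<Rightarrow> nat set set \<Rightarrow> nat \<Rightarrow> nat set" where
  "cell n B x = {y \<in> {1..n}. \<forall>b\<in>B. y \<in> b \<longleftrightarrow> x \<in> b}"

lemma cell_self: "x \<in> {1..n} \<Longrightarrow> x \<in> cell n B x"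
  by (simp add: cell_def)

lemma cell_subset_atLeastAtMost: "cell n B x \<subseteq> {1..n}"
  unfolding cell_def by blast

lemma cell_eq: "y \<in> cell n B x \<Longrightarrow> cell n B y = cell n B x"
  unfolding cell_def by blast

lemma cell_insert: "cell n (insert X B) x = {y \<in> cell n B x. y \<in> X \<longleftrightarrow> x \<in> X}"
  unfolding cell_def by blast

lemma ptstab_iff:
  assumes "B \<subseteq> Pow {1..n}"
  shows "p \<in> ptstab n B \<longleftrightarrow> p permutes {1..n} \<and> (\<forall>x\<in>{1..n}. p x \<in> cell n B x)"
proof
  assume "p \<in> ptstab n B"
  then have p: "p permutes {1..n}" "\<forall>b\<in>B. p ` b = b"
    by (auto simp: ptstab_def sym_group_carrier)
  have "p x \<in> b \<longleftrightarrow> x \<in> b" if "b \<in> B" for x b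
    using p that permutes_inj[OF p(1)] by (metis inj_image_mem_iff)
  then show "p permutes {1..n} \<and> (\<forall>x\<in>{1..n}. p x \<in> cell n B x)"
    using p(1) permutes_in_image by (fastforce simp: cell_def)
next
  assume p: "p permutes {1..n} \<and> (\<forall>x\<in>{1..n}. p x \<in> cell n B x)"
  have "p ` b = b" if b: "b \<in> B" for b
  proof (rule card_subset_eq)
    show "finite b" using b assms finite_subset by blast
    show "p ` b \<subseteq> b" using p b assms by (fastforce simp: cell_def)
    show "card (p ` b) = card b" using p permutes_inj by (metis card_image inj_on_subset subset_UNIV)
  qed
  then show "p \<in> ptstab n B"
    using p by (simp add: ptstab_def sym_group_carrier)
qed

lemma pt_orbits_eq_cells:
  assumes "B \<subseteq> Pow {1..n}"
  shows "pt_orbits n B = cell n B ` {1..n}"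
proof -
  have "{p x | p. p \<in> ptstab n B} = cell n B x" if x: "x \<in> {1..n}" for x
  proof
    show "{p x | p. p \<in> ptstab n B} \<subseteq> cell n B x"
      using ptstab_iff[OF assms] x by auto
  next
    show "cell n B x \<subseteq> {p x | p. p \<in> ptstab n B}"
    proof
      fix y assume y: "y \<in> cell n B x"
      then have "y \<in> {1..n}" using cell_subset_atLeastAtMost by blast
      then have "Transposition.transpose x y \<in> ptstab n B"
        using x y cell_self cell_eq[OF y] unfolding ptstab_iff[OF assms]
        by (auto simp: permutes_swap_id transpose_def)
      then show "y \<in> {p x | p. p \<in> ptstab n B}"
        by (intro CollectI exI[of _ "Transposition.transpose x y"]) simp
    qed
  qed
  then show ?thesis
    unfolding pt_orbits_def setcompr_eq_image Collect_mem_eq by (rule image_cong[OF refl])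
qed

lemma partition_on_pt_orbits:
  assumes "B \<subseteq> Pow {1..n}"
  shows "partition_on {1..n} (pt_orbits n B)"
proof (rule partition_onI)
  show "\<Union>(pt_orbits n B) = {1..n}"
    unfolding pt_orbits_eq_cells[OF assms] using cell_self cell_subset_atLeastAtMost by blast
  show "disjnt D E" if "D \<in> pt_orbits n B" "E \<in> pt_orbits n B" "D \<noteq> E" for D E
    using that cell_eq unfolding pt_orbits_eq_cells[OF assms] disjnt_def by blast
  show "{} \<notin> pt_orbits n B"
    unfolding pt_orbits_eq_cells[OF assms] using cell_self by blast
qed

lemma finite_partition_pt_orbits: "B \<subseteq> Pow {1..n} \<Longrightarrow> finite_partition {1..n} (pt_orbits n B)"
  by (intro finite_partition.intro partition_on_pt_orbits finite_atLeastAtMost)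

lemma pt_orbit_eq_cell:
  assumes "B \<subseteq> Pow {1..n}" and "D \<in> pt_orbits n B" and "x \<in> D"
  shows "D = cell n B x"
proof -
  obtain y where "D = cell n B y"
    using assms(2) unfolding pt_orbits_eq_cells[OF assms(1)] by blast
  with assms(3) show ?thesis
    using cell_eq[of x n B y] by simp
qed

lemma ptstab_image_pt_orbit:
  assumes B: "B \<subseteq> Pow {1..n}" and p: "p \<in> ptstab n B" and D: "D \<in> pt_orbits n B"
  shows "p ` D = D"
proof (rule card_subset_eq)
  obtain x where x: "x \<in> {1..n}" "D = cell n B x"
    using D pt_orbits_eq_cells[OF B] by blast
  have p': "p permutes {1..n}" "\<forall>x\<in>{1..n}. p x \<in> cell n B x"
    using p ptstab_iff[OF B] by blast+
  show "finite D"
    using x(2) finite_subset[OF cell_subset_atLeastAtMost] by simp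
  show "p ` D \<subseteq> D"
  proof
    fix y assume "y \<in> p ` D"
    then obtain z where z: "z \<in> D" "y = p z" by blast
    then have "z \<in> {1..n}" using x cell_subset_atLeastAtMost by blast
    moreover have "cell n B z = D"
      using z(1) x(2) cell_eq[of z n B x] by simp
    ultimately show "y \<in> D"
      using p'(2) z(2) by blast
  qed
  show "card (p ` D) = card D"
    by (intro card_image inj_on_subset[OF permutes_inj[OF p'(1)]]) simp
qed

lemma subgroup_ptstab: "subgroup (ptstab n B) (sym_group n)"
proof (rule group.subgroupI[OF sym_group_is_group])
  show "ptstab n B \<subseteq> carrier (sym_group n)"
    unfolding ptstab_def by blast
  have "id \<in> ptstab n B"
    by (simp add: ptstab_def sym_group_carrier)
  then show "ptstab n B \<noteq> {}" by blast
next
  fix p q assume p: "p \<in> ptstab n B" and q: "q \<in> ptstab n B"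
  then have p': "p permutes {1..n}" "\<forall>b\<in>B. p ` b = b"
    by (auto simp: ptstab_def sym_group_carrier)
  then have "inv' p ` b = b" if "b \<in> B" for b
    using that image_inv_f_f[OF permutes_inj[OF p'(1)], of b] by simp
  then show "inv\<^bsub>sym_group n\<^esub> p \<in> ptstab n B"
    using p' permutes_inv by (simp add: ptstab_def sym_group_carrier)
  have "(p \<circ> q) ` b = b" if "b \<in> B" for b
    using p'(2) q that unfolding ptstab_def by (metis (mono_tags, lifting) image_comp mem_Collect_eq)
  then show "p \<otimes>\<^bsub>sym_group n\<^esub> q \<in> ptstab n B"
    using p' q permutes_compose by (auto simp: ptstab_def sym_group_carrier sym_group_mult)
qed

lemma restrict_image_in_Bij:
  assumes "p permutes S"
  shows "(\<lambda>X\<in>Pow S. p ` X) \<in> Bij (Pow S)"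
proof -
  have "bij_betw (image p) (Pow S) (Pow S)"
    using bij_betw_image_Pow[OF permutes_imp_bij[OF assms]] .
  then have "bij_betw (\<lambda>X\<in>Pow S. p ` X) (Pow S) (Pow S)"
    by (rule bij_betw_cong[THEN iffD1, rotated]) simp
  then show ?thesis
    by (simp add: Bij_def)
qed

lemma group_action_sym_group_Pow:
  "group_action (sym_group n) (Pow {1..n}) (\<lambda>p. \<lambda>X\<in>Pow {1..n}. p ` X)"
  unfolding group_action_def group_hom_def group_hom_axioms_def
proof (intro conjI sym_group_is_group group_BijGroup homI)
  fix p assume "p \<in> carrier (sym_group n)"
  then show "(\<lambda>X\<in>Pow {1..n}. p ` X) \<in> carrier (BijGroup (Pow {1..n}))"
    unfolding BijGroup_def sym_group_carrier by (simp add: restrict_image_in_Bij)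
next
  fix p q assume p: "p \<in> carrier (sym_group n)" and q: "q \<in> carrier (sym_group n)"
  then have pq: "p permutes {1..n}" "q permutes {1..n}"
    by (simp_all add: sym_group_carrier)
  have "(\<lambda>X\<in>Pow {1..n}. (p \<circ> q) ` X)
      = compose (Pow {1..n}) (\<lambda>X\<in>Pow {1..n}. p ` X) (\<lambda>X\<in>Pow {1..n}. q ` X)"
    unfolding compose_def
  proof (rule restrict_ext)
    fix X assume "X \<in> Pow {1..n}"
    moreover from this have "q ` X \<in> Pow {1..n}"
      using permutes_image[OF pq(2)] by blast
    ultimately show "(p \<circ> q) ` X = (\<lambda>X\<in>Pow {1..n}. p ` X) ((\<lambda>X\<in>Pow {1..n}. q ` X) X)"
      by (simp add: image_comp)
  qed
  then show "(\<lambda>X\<in>Pow {1..n}. (p \<otimes>\<^bsub>sym_group n\<^esub> q) ` X)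
      = (\<lambda>X\<in>Pow {1..n}. p ` X) \<otimes>\<^bsub>BijGroup (Pow {1..n})\<^esub> (\<lambda>X\<in>Pow {1..n}. q ` X)"
    using restrict_image_in_Bij[OF pq(1)] restrict_image_in_Bij[OF pq(2)]
    by (simp add: BijGroup_def sym_group_mult)
qed

lemma card_set_orbit_mult_card_set_stab:
  assumes H: "subgroup H (sym_group n)" and a: "a \<subseteq> {1..n}"
  shows "card (set_orbit H a) * card (set_stab H a) = card H"
proof -
  interpret group_action "perm_grp n H" "Pow {1..n}" "\<lambda>p. \<lambda>X\<in>Pow {1..n}. p ` X"
    unfolding perm_grp_def by (rule group_action.induced_action[OF group_action_sym_group_Pow H])
  have "orbit (perm_grp n H) (\<lambda>p. \<lambda>X\<in>Pow {1..n}. p ` X) a = set_orbit H a"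
    using a unfolding orbit_def set_orbit_def perm_grp_def by auto
  moreover have "stabilizer (perm_grp n H) (\<lambda>p. \<lambda>X\<in>Pow {1..n}. p ` X) a = set_stab H a"
    using a unfolding stabilizer_def set_stab_def perm_grp_def by simp
  moreover have "order (perm_grp n H) = card H"
    by (simp add: order_def perm_grp_def)
  ultimately show ?thesis
    using orbit_stabilizer_theorem[of a] a by simp
qed

lemma ptstab_from_cell_bijections:
  assumes B: "B \<subseteq> Pow {1..n}" and h: "\<forall>D\<in>pt_orbits n B. bij_betw (h D) D D"
  obtains \<sigma> where "\<sigma> \<in> ptstab n B" and "\<forall>D\<in>pt_orbits n B. \<forall>x\<in>D. \<sigma> x = h D x"
proof
  interpret finite_partition "{1..n}" "pt_orbits n B"
    by (rule finite_partition_pt_orbits[OF B])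
  define \<sigma> where "\<sigma> x = (if x \<in> {1..n} then h (cell n B x) x else x)" for x
  show agree: "\<forall>D\<in>pt_orbits n B. \<forall>x\<in>D. \<sigma> x = h D x"
  proof (intro ballI)
    fix D x assume D: "D \<in> pt_orbits n B" and x: "x \<in> D"
    then have "x \<in> {1..n}" using cell_subset by blast
    then show "\<sigma> x = h D x"
      unfolding \<sigma>_def using pt_orbit_eq_cell[OF B D x] by simp
  qed
  have "bij_betw \<sigma> D D" if "D \<in> pt_orbits n B" for D
    using h that agree bij_betw_cong by metis
  then have "bij_betw \<sigma> (\<Union>D\<in>pt_orbits n B. D) (\<Union>D\<in>pt_orbits n B. D)"
    using partition_onD2[OF partition]
    by (intro bij_betw_UNION_disjoint) (auto simp: disjoint_family_on_def dest: disjointD)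
  then have "\<sigma> permutes {1..n}"
    using partition_onD1[OF partition] by (intro bij_imp_permutes) (auto simp: \<sigma>_def)
  moreover have "\<sigma> x \<in> cell n B x" if "x \<in> {1..n}" for x
  proof -
    have "cell n B x \<in> pt_orbits n B"
      using that pt_orbits_eq_cells[OF B] by blast
    then show ?thesis
      using h that cell_self[OF that] bij_betwE by (fastforce simp: \<sigma>_def)
  qed
  ultimately show "\<sigma> \<in> ptstab n B"
    by (simp add: ptstab_iff[OF B])
qed

lemma card_Int_ptstab_image:
  assumes B: "B \<subseteq> Pow {1..n}" and p: "p \<in> ptstab n B" and D: "D \<in> pt_orbits n B"
  shows "card (D \<inter> p ` a) = card (D \<inter> a)"
proof -
  have inj: "inj p"
    using p ptstab_iff[OF B] permutes_inj by blast
  have "D \<inter> p ` a = p ` D \<inter> p ` a"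
    using ptstab_image_pt_orbit[OF B p D] by simp
  also have "\<dots> = p ` (D \<inter> a)"
    by (simp add: image_Int[OF inj])
  finally show ?thesis
    using inj by (simp add: card_image inj_on_subset)
qed

lemma ptstab_transitive_on_cell_counts:
  assumes B: "B \<subseteq> Pow {1..n}" and a: "a \<subseteq> {1..n}" and b: "b \<subseteq> {1..n}"
    and counts: "\<forall>D\<in>pt_orbits n B. card (D \<inter> b) = card (D \<inter> a)"
  obtains \<sigma> where "\<sigma> \<in> ptstab n B" and "\<sigma> ` a = b"
proof -
  interpret finite_partition "{1..n}" "pt_orbits n B"
    by (rule finite_partition_pt_orbits[OF B])
  have ground: "\<Union>(pt_orbits n B) = {1..n}"
    using partition_onD1[OF partition] by simp
  have "\<forall>D\<in>pt_orbits n B. \<exists>h. bij_betw h D D \<and> h ` (D \<inter> a) = D \<inter> b"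
    using counts finite_cell by (auto intro!: ex_bij_betw_image)
  then obtain h where h: "\<forall>D\<in>pt_orbits n B. bij_betw (h D) D D \<and> h D ` (D \<inter> a) = D \<inter> b"
    by metis
  then have "\<forall>D\<in>pt_orbits n B. bij_betw (h D) D D"
    by blast
  then obtain \<sigma> where \<sigma>: "\<sigma> \<in> ptstab n B" "\<forall>D\<in>pt_orbits n B. \<forall>x\<in>D. \<sigma> x = h D x"
    by (rule ptstab_from_cell_bijections[OF B])
  have "\<sigma> ` a = (\<Union>D\<in>pt_orbits n B. \<sigma> ` (D \<inter> a))"
    using a ground by blast
  also have "\<dots> = (\<Union>D\<in>pt_orbits n B. h D ` (D \<inter> a))"
    using \<sigma>(2) by (intro SUP_cong refl image_cong) auto
  also have "\<dots> = b"
    using h b ground by auto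
  finally show ?thesis
    using that \<sigma>(1) by blast
qed

lemma set_orbit_ptstab:
  assumes B: "B \<subseteq> Pow {1..n}" and a: "a \<subseteq> {1..n}"
  shows "set_orbit (ptstab n B) a
    = {b. b \<subseteq> {1..n} \<and> (\<forall>D\<in>pt_orbits n B. card (D \<inter> b) = card (D \<inter> a))}"
proof (intro equalityI subsetI)
  fix b assume "b \<in> set_orbit (ptstab n B) a"
  then obtain p where p: "p \<in> ptstab n B" and b: "b = p ` a"
    unfolding set_orbit_def by blast
  have "p permutes {1..n}"
    using p ptstab_iff[OF B] by blast
  then have "b \<subseteq> {1..n}"
    using b image_mono[OF a, of p] permutes_image by metis
  then show "b \<in> {b. b \<subseteq> {1..n} \<and> (\<forall>D\<in>pt_orbits n B. card (D \<inter> b) = card (D \<inter> a))}"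
    using card_Int_ptstab_image[OF B p] b by simp
next
  fix b assume "b \<in> {b. b \<subseteq> {1..n} \<and> (\<forall>D\<in>pt_orbits n B. card (D \<inter> b) = card (D \<inter> a))}"
  then obtain \<sigma> where "\<sigma> \<in> ptstab n B" "\<sigma> ` a = b"
    using ptstab_transitive_on_cell_counts[OF B a] by blast
  then show "b \<in> set_orbit (ptstab n B) a"
    unfolding set_orbit_def by blast
qed

lemma card_set_orbit_ptstab:
  assumes "B \<subseteq> Pow {1..n}" and "a \<subseteq> {1..n}"
  shows "card (set_orbit (ptstab n B) a) = cell_weight (pt_orbits n B) a"
  unfolding set_orbit_ptstab[OF assms] cell_weight_def
  using finite_partition.card_sets_with_cell_counts[OF finite_partition_pt_orbits[OF assms(1)]] .

lemma card_set_orbit_eq_if_set_stab_iso: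
  assumes H: "subgroup H (sym_group n)" and a: "a \<subseteq> {1..n}" and a': "a' \<subseteq> {1..n}"
    and iso: "perm_grp n (set_stab H a) \<cong> perm_grp n (set_stab H a')"
  shows "card (set_orbit H a) = card (set_orbit H a')"
proof -
  have stabs: "card (set_stab H a) = card (set_stab H a')"
    using iso_same_card[OF iso] by (simp add: perm_grp_def)
  have "id \<in> set_stab H a'"
    using subgroup.one_closed[OF H] by (simp add: set_stab_def sym_group_one)
  moreover have "finite (set_stab H a')"
  proof (rule finite_subset)
    show "set_stab H a' \<subseteq> {p. p permutes {1..n}}"
      using subgroup.subset[OF H] by (auto simp: set_stab_def sym_group_carrier)
  qed (simp add: finite_permutations)
  ultimately have "card (set_stab H a') \<noteq> 0"
    by auto
  moreover have "card (set_orbit H a) * card (set_stab H a') = card (set_orbit H a') * card (set_stab H a')"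
    using card_set_orbit_mult_card_set_stab[OF H a] card_set_orbit_mult_card_set_stab[OF H a'] stabs
    by simp
  ultimately show ?thesis
    by simp
qed

lemma (in group) iso_conjugate_subgroup:
  assumes H: "subgroup H G" and g: "g \<in> carrier G"
  shows "G\<lparr>carrier := H\<rparr> \<cong> G\<lparr>carrier := (\<lambda>h. g \<otimes> h \<otimes> inv g) ` H\<rparr>"
proof -
  have "(\<lambda>h. g \<otimes> h \<otimes> inv g) \<in> iso G G"
    unfolding iso_def
  proof (intro CollectI conjI homI)
    show "bij_betw (\<lambda>h. g \<otimes> h \<otimes> inv g) (carrier G) (carrier G)"
      using conjugation_is_bij[OF g] by (rule bij_betw_cong[THEN iffD1, rotated]) simp
  qed (use g in \<open>simp_all add: m_assoc inv_solve_left\<close>)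
  then show ?thesis
    using iso_restrict[OF _ is_group is_group H] is_isoI by blast
qed

lemma ptstab_conjugate:
  assumes \<sigma>: "\<sigma> permutes {1..n}"
  shows "(\<lambda>p. \<sigma> \<circ> p \<circ> inv' \<sigma>) ` ptstab n B = ptstab n ((`) \<sigma> ` B)"
proof (intro equalityI subsetI)
  fix q assume "q \<in> (\<lambda>p. \<sigma> \<circ> p \<circ> inv' \<sigma>) ` ptstab n B"
  then obtain p where p: "p permutes {1..n}" "\<forall>b\<in>B. p ` b = b" and q: "q = \<sigma> \<circ> p \<circ> inv' \<sigma>"
    by (auto simp: ptstab_def sym_group_carrier)
  have "q ` \<sigma> ` b = \<sigma> ` p ` b" for b
    unfolding q using permutes_inverses(2)[OF \<sigma>] by (simp add: image_image)
  then have "q ` \<sigma> ` b = \<sigma> ` b" if "b \<in> B" for b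
    using p(2) that by simp
  moreover have "q permutes {1..n}"
    unfolding q by (intro permutes_compose permutes_inv p(1) \<sigma>)
  ultimately show "q \<in> ptstab n ((`) \<sigma> ` B)"
    by (auto simp: ptstab_def sym_group_carrier)
next
  fix q assume "q \<in> ptstab n ((`) \<sigma> ` B)"
  then have q: "q permutes {1..n}" "\<forall>b\<in>B. q ` \<sigma> ` b = \<sigma> ` b"
    by (auto simp: ptstab_def sym_group_carrier)
  define p where "p = inv' \<sigma> \<circ> q \<circ> \<sigma>"
  have "p ` b = inv' \<sigma> ` q ` \<sigma> ` b" for b
    unfolding p_def by (simp add: image_image)
  then have "p ` b = b" if "b \<in> B" for b
    using q(2) that image_inv_f_f[OF permutes_inj[OF \<sigma>]] by simp
  moreover have "p permutes {1..n}"
    unfolding p_def by (intro permutes_compose permutes_inv q(1) \<sigma>)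
  moreover have "q = \<sigma> \<circ> p \<circ> inv' \<sigma>"
    unfolding p_def using permutes_inverses[OF \<sigma>] by (simp add: fun_eq_iff)
  ultimately show "q \<in> (\<lambda>p. \<sigma> \<circ> p \<circ> inv' \<sigma>) ` ptstab n B"
    by (auto simp: ptstab_def sym_group_carrier)
qed

lemma set_stab_ptstab: "set_stab (ptstab n B) a = ptstab n (insert a B)"
  unfolding set_stab_def ptstab_def by blast

lemma ptstab_insert_cong:
  assumes B: "B \<subseteq> Pow {1..n}" and XY: "X \<subseteq> {1..n}" "Y \<subseteq> {1..n}"
    and cells: "\<forall>D\<in>pt_orbits n B. D \<inter> Y = D \<inter> X \<or> D \<inter> Y = D - X"
  shows "ptstab n (insert X B) = ptstab n (insert Y B)"
proof -
  have "cell n (insert X B) x = cell n (insert Y B) x" if x: "x \<in> {1..n}" for x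
  proof -
    have "cell n B x \<in> pt_orbits n B"
      using x pt_orbits_eq_cells[OF B] by blast
    then have "cell n B x \<inter> Y = cell n B x \<inter> X \<or> cell n B x \<inter> Y = cell n B x - X"
      using cells by blast
    then show ?thesis
      unfolding cell_insert using cell_self[OF x] by blast
  qed
  moreover have "insert X B \<subseteq> Pow {1..n}" "insert Y B \<subseteq> Pow {1..n}"
    using B XY by blast+
  ultimately show ?thesis
    by (auto simp: ptstab_iff)
qed

lemma ptstab_insert_image_iso:
  assumes \<sigma>: "\<sigma> \<in> ptstab n B"
  shows "perm_grp n (ptstab n (insert a B)) \<cong> perm_grp n (ptstab n (insert (\<sigma> ` a) B))"
proof -
  have \<sigma>_perm: "\<sigma> permutes {1..n}"
    using \<sigma> by (simp add: ptstab_def sym_group_carrier)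
  have "(`) \<sigma> ` B = B"
    using \<sigma> unfolding ptstab_def by force
  then have "(\<lambda>p. \<sigma> \<circ> p \<circ> inv' \<sigma>) ` ptstab n (insert a B) = ptstab n (insert (\<sigma> ` a) B)"
    using ptstab_conjugate[OF \<sigma>_perm, of "insert a B"] by simp
  moreover have "perm_grp n (ptstab n (insert a B))
      \<cong> perm_grp n ((\<lambda>p. \<sigma> \<circ> p \<circ> inv' \<sigma>) ` ptstab n (insert a B))"
    using group.iso_conjugate_subgroup[OF sym_group_is_group subgroup_ptstab, of \<sigma> n "insert a B"] \<sigma>
    unfolding perm_grp_def by (simp add: ptstab_def sym_group_mult)
  ultimately show ?thesis
    by simp
qed

lemma set_stab_iso_if_counts_up_to_complement:
  assumes B: "B \<subseteq> Pow {1..n}" and a: "a \<subseteq> {1..n}" and a': "a' \<subseteq> {1..n}"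
    and compl: "counts_up_to_complement (pt_orbits n B) a a'"
  shows "perm_grp n (set_stab (ptstab n B) a) \<cong> perm_grp n (set_stab (ptstab n B) a')"
proof -
  obtain b where b: "b \<subseteq> {1..n}" "\<forall>D\<in>pt_orbits n B. card (D \<inter> b) = card (D \<inter> a)"
    "\<forall>D\<in>pt_orbits n B. D \<inter> a' = D \<inter> b \<or> D \<inter> a' = D - b"
    by (rule finite_partition.counts_up_to_complementE[OF finite_partition_pt_orbits[OF B] compl])
  obtain \<sigma> where \<sigma>: "\<sigma> \<in> ptstab n B" "\<sigma> ` a = b"
    by (rule ptstab_transitive_on_cell_counts[OF B a b(1,2)])
  have "perm_grp n (ptstab n (insert a B)) \<cong> perm_grp n (ptstab n (insert b B))"
    using ptstab_insert_image_iso[OF \<sigma>(1), of a] \<sigma>(2) by simp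
  also have "ptstab n (insert b B) = ptstab n (insert a' B)"
    using ptstab_insert_cong[OF B b(1) a' b(3)] .
  finally show ?thesis
    by (simp add: set_stab_ptstab)
qed

section \<open>Runs of MetaGreedy\<close>

definition greedy_run :: "nat \<Rightarrow> nat set set \<Rightarrow> nat list \<Rightarrow> bool" where
  "greedy_run n B ms \<longleftrightarrow> (\<forall>j<length ms. greedy_step n B (set (take j ms)) (ms ! j))"

lemma greedy_run_Nil [simp]: "greedy_run n B []"
  by (simp add: greedy_run_def)

lemma greedy_run_snoc [simp]:
  "greedy_run n B (ms @ [m]) \<longleftrightarrow> greedy_run n B ms \<and> greedy_step n B (set ms) m"
  unfolding greedy_run_def by (auto simp: nth_append less_Suc_eq)

lemma metagreedy_output_iff:
  "metagreedy_output n r B a \<longleftrightarrow> (\<exists>ms. length ms = r \<and> greedy_run n B ms \<and> a = set ms)"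
  unfolding metagreedy_output_def greedy_run_def by auto

lemma score_eq_max_score_iff:
  assumes B: "B \<subseteq> Pow {1..n}" and D: "D \<in> pt_orbits n B"
  shows "score D M = max_score n B M \<longleftrightarrow> (\<forall>E\<in>pt_orbits n B. score E M \<le> score D M)"
proof -
  have fin: "finite (pt_orbits n B)"
    using finite_partition.finite_cells[OF finite_partition_pt_orbits[OF B]] .
  show ?thesis
  proof
    assume "score D M = max_score n B M"
    then show "\<forall>E\<in>pt_orbits n B. score E M \<le> score D M"
      unfolding max_score_def using fin by auto
  next
    assume "\<forall>E\<in>pt_orbits n B. score E M \<le> score D M"
    then show "score D M = max_score n B M"
      unfolding max_score_def using fin D by (intro Max_eqI[symmetric]) auto
  qed
qed

lemma greedy_stepD:
  assumes B: "B \<subseteq> Pow {1..n}" and step: "greedy_step n B M m"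
  shows "m \<in> {1..n}" "m \<notin> M"
    and "\<exists>D\<in>pt_orbits n B. m \<in> D \<and> (\<forall>E\<in>pt_orbits n B. score E M \<le> score D M)"
  using step score_eq_max_score_iff[OF B] unfolding greedy_step_def greedy_cands_def by auto

lemma greedy_runD:
  assumes B: "B \<subseteq> Pow {1..n}"
  shows "greedy_run n B ms \<Longrightarrow> set ms \<subseteq> {1..n} \<and> distinct ms \<and> exchange_optimal (pt_orbits n B) (set ms)"
proof (induction ms rule: rev_induct)
  case Nil
  then show ?case by (simp add: exchange_optimal_def)
next
  case (snoc m ms)
  then have IH: "set ms \<subseteq> {1..n}" "distinct ms" "exchange_optimal (pt_orbits n B) (set ms)"
    and step: "greedy_step n B (set ms) m"
    by simp_all
  obtain D where "D \<in> pt_orbits n B" "m \<in> D" "\<forall>E\<in>pt_orbits n B. score E (set ms) \<le> score D (set ms)"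
    using greedy_stepD(3)[OF B step] by blast
  then have "exchange_optimal (pt_orbits n B) (insert m (set ms))"
    using finite_partition.exchange_optimal_insert[OF finite_partition_pt_orbits[OF B] IH(3)]
      greedy_stepD(2)[OF B step] by blast
  then show ?case
    using IH greedy_stepD(1,2)[OF B step] by simp
qed

(* Away from a tie at score 1, any point of a best cell in which Y exceeds M is a legal choice and
   Y can stay; at score 1 the choice is forced by neighbourhood sizes and Y has to move. *)
lemma greedy_step_toward_maximiser:
  assumes B: "B \<subseteq> Pow {1..n}" and Y: "Y \<subseteq> {1..n}" "weight_maximal {1..n} (pt_orbits n B) Y"
    and M: "M \<subseteq> {1..n}" "card M < card Y"
    and le: "\<forall>G\<in>pt_orbits n B. card (G \<inter> M) \<le> card (G \<inter> Y)"
  obtains m Y' where "greedy_step n B M m" and "Y' \<subseteq> {1..n}" and "card Y' = card Y"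
    and "weight_maximal {1..n} (pt_orbits n B) Y'" and "counts_up_to_complement (pt_orbits n B) Y Y'"
    and "\<forall>G\<in>pt_orbits n B. card (G \<inter> insert m M) \<le> card (G \<inter> Y')"
proof -
  interpret finite_partition "{1..n}" "pt_orbits n B"
    by (rule finite_partition_pt_orbits[OF B])
  obtain D where D: "D \<in> pt_orbits n B" "card (D \<inter> M) < card (D \<inter> Y)"
    and D_max: "\<forall>E\<in>pt_orbits n B. score E M \<le> score D M"
    using max_score_cell_with_deficit[OF Y M le] by blast
  obtain m0 where "m0 \<in> D \<inter> Y" "m0 \<notin> M"
    by (rule card_Int_less_elim[OF finite_cell[OF D(1)] D(2)])
  then have m0: "m0 \<in> D" "m0 \<notin> M" by blast+
  have cand: "m0 \<in> greedy_cands n B M"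
    unfolding greedy_cands_def using m0 D(1) cell_subset score_eq_max_score_iff[OF B D(1)] D_max by blast
  show ?thesis
  proof (cases "max_score n B M = 1")
    case False
    then have "greedy_step n B M m0"
      using cand by (simp add: greedy_step_def)
    then show ?thesis
      using that Y counts_up_to_complement_refl counts_insert_le[OF D(1) m0 D(2) le] by blast
  next
    case True
    obtain m where m: "m \<in> greedy_cands n B M"
      and m_min: "\<forall>m'. m' \<in> greedy_cands n B M \<longrightarrow> card (nbhd B m) \<le> card (nbhd B m')"
      using ex_has_least_nat[of "\<lambda>x. x \<in> greedy_cands n B M" m0 "\<lambda>x. card (nbhd B x)"] cand by blast
    then have step: "greedy_step n B M m"
      by (simp add: greedy_step_def)
    obtain E where E: "E \<in> pt_orbits n B" "m \<in> E" "score E M = 1"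
      using m True unfolding greedy_cands_def by auto
    then have "\<forall>G\<in>pt_orbits n B. score G M \<le> 1"
      using score_eq_max_score_iff[OF B E(1), of M] True by simp
    then obtain Y' where "Y' \<subseteq> {1..n}" "card Y' = card Y" "cell_weight (pt_orbits n B) Y' = cell_weight (pt_orbits n B) Y"
      "counts_up_to_complement (pt_orbits n B) Y Y'" "\<forall>G\<in>pt_orbits n B. card (G \<inter> insert m M) \<le> card (G \<inter> Y')"
      using exchange_at_score_one[OF Y M le E(1,2) greedy_stepD(2)[OF B step] E(3)] by blast
    then show ?thesis
      using that[OF step] weight_maximal_cong[OF Y(2)] by blast
  qed
qed

lemma greedy_run_toward_maximiser:
  assumes B: "B \<subseteq> Pow {1..n}" and a: "a \<subseteq> {1..n}" "weight_maximal {1..n} (pt_orbits n B) a"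
  shows "k \<le> card a \<Longrightarrow> \<exists>ms Y. length ms = k \<and> greedy_run n B ms \<and> Y \<subseteq> {1..n} \<and> card Y = card a
    \<and> weight_maximal {1..n} (pt_orbits n B) Y \<and> counts_up_to_complement (pt_orbits n B) a Y
    \<and> (\<forall>G\<in>pt_orbits n B. card (G \<inter> set ms) \<le> card (G \<inter> Y))"
proof (induction k)
  case 0
  show ?case
    using a finite_partition.counts_up_to_complement_refl[OF finite_partition_pt_orbits[OF B]]
    by (intro exI[of _ "[]"] exI[of _ a]) simp
next
  case (Suc k)
  then obtain ms Y where ms: "length ms = k" "greedy_run n B ms"
    and Y: "Y \<subseteq> {1..n}" "card Y = card a" "weight_maximal {1..n} (pt_orbits n B) Y"
      "counts_up_to_complement (pt_orbits n B) a Y" "\<forall>G\<in>pt_orbits n B. card (G \<inter> set ms) \<le> card (G \<inter> Y)"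
    by auto
  have "set ms \<subseteq> {1..n}"
    using greedy_runD[OF B ms(2)] by blast
  moreover have "card (set ms) < card Y"
    using card_length[of ms] ms(1) Y(2) Suc.prems by linarith
  ultimately obtain m Y' where "greedy_step n B (set ms) m" "Y' \<subseteq> {1..n}" "card Y' = card Y"
    "weight_maximal {1..n} (pt_orbits n B) Y'" "counts_up_to_complement (pt_orbits n B) Y Y'"
    "\<forall>G\<in>pt_orbits n B. card (G \<inter> insert m (set ms)) \<le> card (G \<inter> Y')"
    by (rule greedy_step_toward_maximiser[OF B Y(1,3) _ _ Y(5)])
  then show ?case
    using ms Y(2,4) finite_partition.counts_up_to_complement_trans[OF finite_partition_pt_orbits[OF B]]
    by (intro exI[of _ "ms @ [m]"] exI[of _ Y']) auto
qed

lemma metagreedy_output_exchange_optimal: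
  assumes B: "B \<subseteq> Pow {1..n}" and out: "metagreedy_output n r B a"
  shows "a \<subseteq> {1..n}" and "card a = r" and "exchange_optimal (pt_orbits n B) a"
  using out greedy_runD[OF B] distinct_card
  unfolding metagreedy_output_iff by fastforce+

lemma metagreedy_output_up_to_complement:
  assumes B: "B \<subseteq> Pow {1..n}" and a: "a \<subseteq> {1..n}" "weight_maximal {1..n} (pt_orbits n B) a"
  obtains a' where "metagreedy_output n (card a) B a'" and "a' \<subseteq> {1..n}"
    and "counts_up_to_complement (pt_orbits n B) a a'"
proof -
  interpret finite_partition "{1..n}" "pt_orbits n B"
    by (rule finite_partition_pt_orbits[OF B])
  obtain ms Y where ms: "length ms = card a" "greedy_run n B ms"
    and Y: "Y \<subseteq> {1..n}" "card Y = card a" "counts_up_to_complement (pt_orbits n B) a Y"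
      "\<forall>G\<in>pt_orbits n B. card (G \<inter> set ms) \<le> card (G \<inter> Y)"
    using greedy_run_toward_maximiser[OF B a order_refl] by blast
  have out: "metagreedy_output n (card a) B (set ms)"
    using ms by (auto simp: metagreedy_output_iff)
  have "set ms \<subseteq> {1..n}" and "card (set ms) = card Y"
    using metagreedy_output_exchange_optimal[OF B out] Y(2) by simp_all
  then have "\<forall>G\<in>pt_orbits n B. card (G \<inter> set ms) = card (G \<inter> Y)"
    using cell_counts_eq_if_le[OF _ Y(1) Y(4)] by simp
  then have "counts_up_to_complement (pt_orbits n B) Y (set ms)"
    unfolding counts_up_to_complement_def by simp
  then show ?thesis
    using that out \<open>set ms \<subseteq> {1..n}\<close> counts_up_to_complement_trans[OF Y(3)] by blast
qed

lemma weight_maximal_if_set_stab_iso: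
  assumes B: "B \<subseteq> Pow {1..n}" and a: "a \<subseteq> {1..n}" and out: "metagreedy_output n (card a) B a'"
    and iso: "perm_grp n (set_stab (ptstab n B) a) \<cong> perm_grp n (set_stab (ptstab n B) a')"
  shows "weight_maximal {1..n} (pt_orbits n B) a"
proof -
  note a' = metagreedy_output_exchange_optimal[OF B out]
  have "cell_weight (pt_orbits n B) a = cell_weight (pt_orbits n B) a'"
    using card_set_orbit_eq_if_set_stab_iso[OF subgroup_ptstab a a'(1) iso]
      card_set_orbit_ptstab[OF B a] card_set_orbit_ptstab[OF B a'(1)] by simp
  moreover have "weight_maximal {1..n} (pt_orbits n B) a'"
    using finite_partition.exchange_optimal_imp_weight_maximal[OF finite_partition_pt_orbits[OF B] a'(1,3)] .
  ultimately show ?thesis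
    using weight_maximal_cong[of "{1..n}" "pt_orbits n B" a' a] a'(2) by simp
qed

theorem lemma2p2:
  fixes n r :: nat and B :: "nat set set" and a :: "nat set"
  assumes "n > 2 * r" and "2 * r \<ge> 4"
    and "B \<subseteq> Omega n r"
    and "a \<in> Omega n r"
  shows "(\<forall>b \<in> Omega n r. card (set_orbit (ptstab n B) b) \<le> card (set_orbit (ptstab n B) a))
     \<longleftrightarrow> (\<exists>a'. metagreedy_output n r B a' \<and>
            perm_grp n (set_stab (ptstab n B) a) \<cong> perm_grp n (set_stab (ptstab n B) a'))"
proof -
  have B: "B \<subseteq> Pow {1..n}" and a: "a \<subseteq> {1..n}" "card a = r"
    using assms(3,4) by (auto simp: Omega_def)
  have "(\<forall>b \<in> Omega n r. card (set_orbit (ptstab n B) b) \<le> card (set_orbit (ptstab n B) a))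
      \<longleftrightarrow> weight_maximal {1..n} (pt_orbits n B) a"
    using a card_set_orbit_ptstab[OF B] by (auto simp: Omega_def weight_maximal_def)
  moreover have "\<exists>a'. metagreedy_output n r B a' \<and>
      perm_grp n (set_stab (ptstab n B) a) \<cong> perm_grp n (set_stab (ptstab n B) a')"
    if max: "weight_maximal {1..n} (pt_orbits n B) a"
  proof -
    obtain a' where "metagreedy_output n (card a) B a'" "a' \<subseteq> {1..n}"
      "counts_up_to_complement (pt_orbits n B) a a'"
      by (rule metagreedy_output_up_to_complement[OF B a(1) max])
    then show ?thesis
      using set_stab_iso_if_counts_up_to_complement[OF B a(1)] a(2) by blast
  qed
  ultimately show ?thesis
    using weight_maximal_if_set_stab_iso[OF B a(1)] a(2) by blast
qed

end
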